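(* Let $\alpha:[0,T]\to[0,1]$ be continuously differentiable and strictly decreasing with $\alpha_0=1$ and $\alpha_T=0$. Fix $x_0\in\mathbb{R}^d$ and, for $t\in(0,T]$, let $p_t=\mathcal{N}(\sqrt{\alpha_t}\,x_0,(1-\alpha_t)I_d)$. This is the time-$t$ marginal of the linear SDE $du=F_t u\,dt+G_t\,dw$ with $F_t=\tfrac12\tfrac{d\log\alpha_t}{dt}I_d$, $G_t=\sqrt{-\tfrac{d\log\alpha_t}{dt}}\,I_d$, started from the Dirac distribution $p_0=\delta_{x_0}$. Let $u:(0,T)\to\mathbb{R}^d$ be any solution of the probability flow ODE with the exact score, $$\frac{du}{dt}=F_t u-\tfrac12 G_tG_t^T\nabla\log p_t(u).$$ Then $\epsilon_{\rm GT}(u(t),t):=-\sqrt{1-\alpha_t}\,\nabla\log p_t(u(t))$ is constant in $t\in(0,T)$. Moreover, if $u(t)$ has a limit $u(T)$ as $t\to T$, this constant equals $-\nabla\log p_T(u(T))=u(T)$.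
   Context: $\nabla$ denotes the gradient with respect to the spatial variable. The quantity $\epsilon_{\rm GT}$ is the ground-truth "noise prediction" associated with the score parameterization $s(u,t)=-\epsilon(u,t)/\sqrt{1-\alpha_t}$. *)

theory Defs
  imports "HOL-Analysis.Analysis"
begin

definition grad :: "(real^'n \<Rightarrow> real) \<Rightarrow> real^'n \<Rightarrow> real^'n" where
  "grad f x = (THE g. (f has_derivative (\<lambda>h. g \<bullet> h)) (at x))"

definition gauss_density :: "real^'n \<Rightarrow> real \<Rightarrow> real^'n \<Rightarrow> real" where
  "gauss_density m s v =
     (2 * pi * s) powr (- real CARD('n) / 2) * exp (- (norm (v - m))\<^sup>2 / (2 * s))"

definition marg :: "(real \<Rightarrow> real) \<Rightarrow> real^'n \<Rightarrow> real \<Rightarrow> real^'n \<Rightarrow> real" where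
  "marg \<alpha> x0 t = gauss_density (sqrt (\<alpha> t) *\<^sub>R x0) (1 - \<alpha> t)"

definition score :: "(real \<Rightarrow> real) \<Rightarrow> real^'n \<Rightarrow> real \<Rightarrow> real^'n \<Rightarrow> real^'n" where
  "score \<alpha> x0 t = grad (\<lambda>v. ln (marg \<alpha> x0 t v))"

text \<open>F_t (scalar factor of I_d) and G_t (scalar factor of I_d).\<close>
definition Fcoef :: "(real \<Rightarrow> real) \<Rightarrow> real \<Rightarrow> real" where
  "Fcoef \<alpha> t = 1/2 * deriv (\<lambda>s. ln (\<alpha> s)) t"

definition Gcoef :: "(real \<Rightarrow> real) \<Rightarrow> real \<Rightarrow> real" where
  "Gcoef \<alpha> t = sqrt (- deriv (\<lambda>s. ln (\<alpha> s)) t)"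

definition eps_GT :: "(real \<Rightarrow> real) \<Rightarrow> real^'n \<Rightarrow> real^'n \<Rightarrow> real \<Rightarrow> real^'n" where
  "eps_GT \<alpha> x0 u t = - (sqrt (1 - \<alpha> t) *\<^sub>R score \<alpha> x0 t u)"

end

theory Submission
  imports Defs
begin

(* Since p_t is Gaussian, its score is affine: grad log p_t(v) = -(v - sqrt(alpha_t) x0) / (1 - alpha_t).
   Hence eps_GT(v, t) = (v - sqrt(alpha_t) x0) / sqrt(1 - alpha_t) is the noise eps in
   v = sqrt(alpha_t) x0 + sqrt(1 - alpha_t) eps. Substituting F and G, the probability flow drift
   becomes (sqrt alpha_t)' x0 + (log sqrt(1 - alpha_t))' (v - sqrt(alpha_t) x0), which is exactly the
   velocity of sqrt(alpha_t) x0 + sqrt(1 - alpha_t) eps for a fixed eps. So the noise has zero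
   derivative along every solution, and letting t -> T, where alpha_T = 0, identifies it with u(T). *)

lemma grad_eqI:
  fixes f :: "real^'n \<Rightarrow> real"
  assumes "(f has_derivative (\<lambda>h. g \<bullet> h)) (at x)"
  shows "grad f x = g"
  unfolding grad_def
proof (rule the_equality)
  fix g' assume "(f has_derivative (\<lambda>h. g' \<bullet> h)) (at x)"
  with assms have "\<And>h. g \<bullet> h = g' \<bullet> h" by (metis has_derivative_unique)
  from this[of "g - g'"] have "(g - g') \<bullet> (g - g') = 0" by (simp add: inner_diff)
  then show "g' = g" by simp
qed (rule assms)

lemma grad_ln_gauss_density:
  fixes m v :: "real^'n"
  assumes "s > 0"
  shows "grad (\<lambda>v. ln (gauss_density m s v)) v = - ((1 / s) *\<^sub>R (v - m))"
proof -
  define C where "C = ln ((2 * pi * s) powr (- real CARD('n) / 2))"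
  have "(\<lambda>v. ln (gauss_density m s v)) = (\<lambda>v. C - ((v - m) \<bullet> (v - m)) / (2 * s))"
    using assms by (simp add: fun_eq_iff gauss_density_def C_def ln_mult power2_norm_eq_inner)
  moreover have "((\<lambda>v. C - ((v - m) \<bullet> (v - m)) / (2 * s)) has_derivative
                   (\<lambda>h. (- ((1 / s) *\<^sub>R (v - m))) \<bullet> h)) (at v)"
    using assms by (auto intro!: derivative_eq_intros simp: inner_commute inner_diff field_simps)
  ultimately show ?thesis by (simp add: grad_eqI)
qed

lemma score_eq:
  assumes "\<alpha> t < 1"
  shows "score \<alpha> x0 t v = - ((1 / (1 - \<alpha> t)) *\<^sub>R (v - sqrt (\<alpha> t) *\<^sub>R x0))"
  using assms by (simp add: score_def marg_def grad_ln_gauss_density)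

lemma eps_GT_eq:
  assumes "\<alpha> t < 1"
  shows "eps_GT \<alpha> x0 v t = (1 / sqrt (1 - \<alpha> t)) *\<^sub>R (v - sqrt (\<alpha> t) *\<^sub>R x0)"
proof -
  have "sqrt (1 - \<alpha> t) * (1 / (1 - \<alpha> t)) = 1 / sqrt (1 - \<alpha> t)"
    using assms by (simp add: field_simps flip: real_sqrt_mult)
  then show ?thesis
    using assms by (simp add: eps_GT_def score_eq)
qed

lemma DERIV_nonpos_if_eventually_le_right:
  fixes f :: "real \<Rightarrow> real"
  assumes "DERIV f x :> l" and "\<forall>\<^sub>F y in at_right x. f y \<le> f x"
  shows "l \<le> 0"
proof (rule ccontr)
  assume "\<not> l \<le> 0"
  then obtain d where "d > 0" and inc: "\<forall>h > 0. h < d \<longrightarrow> f x < f (x + h)"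
    using DERIV_pos_inc_right[OF assms(1)] by auto
  have "f x < f y" if "x < y" "y < x + d" for y
    using inc[rule_format, of "y - x"] that by simp
  then have "\<forall>\<^sub>F y in at_right x. f x < f y"
    unfolding eventually_at_right_field using \<open>d > 0\<close> by (intro exI[of _ "x + d"]) auto
  with assms(2) have "\<forall>\<^sub>F y in at_right x. False"
    by eventually_elim simp
  then show False by simp
qed

text \<open>The sign condition on d is what makes Gcoef squared equal to -d/\<alpha>: for a negative
  radicand, Isabelle's sqrt returns a negative number whose square is positive.\<close>
lemma probability_flow_drift_eq:
  assumes "(\<alpha> has_real_derivative d) (at t)" "d \<le> 0" "0 < \<alpha> t" "\<alpha> t < 1"
  shows "Fcoef \<alpha> t *\<^sub>R v - (1/2 * (Gcoef \<alpha> t * Gcoef \<alpha> t)) *\<^sub>R score \<alpha> x0 t v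
       = (d / (2 * sqrt (\<alpha> t))) *\<^sub>R x0 - (d / (2 * (1 - \<alpha> t))) *\<^sub>R (v - sqrt (\<alpha> t) *\<^sub>R x0)"
proof -
  have "((\<lambda>s. ln (\<alpha> s)) has_real_derivative d / \<alpha> t) (at t)"
    using assms by (auto intro!: derivative_eq_intros)
  then have dln: "deriv (\<lambda>s. ln (\<alpha> s)) t = d / \<alpha> t"
    by (rule DERIV_imp_deriv)
  define a where "a = \<alpha> t"
  have a: "0 < a" "a < 1" "sqrt a * sqrt a = a"
    using assms by (simp_all add: a_def)
  have "Gcoef \<alpha> t * Gcoef \<alpha> t = - d / a"
    using assms by (simp add: Gcoef_def dln a_def divide_nonpos_pos)
  then have "Fcoef \<alpha> t *\<^sub>R v - (1/2 * (Gcoef \<alpha> t * Gcoef \<alpha> t)) *\<^sub>R score \<alpha> x0 t v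
      = (d / (2 * a) - d / (2 * a * (1 - a))) *\<^sub>R v + (d * sqrt a / (2 * a * (1 - a))) *\<^sub>R x0"
    using assms by (simp add: Fcoef_def dln score_eq a_def algebra_simps)
  also have "d / (2 * a) - d / (2 * a * (1 - a)) = - (d / (2 * (1 - a)))"
    using a by (simp add: field_simps)
  also have "d * sqrt a / (2 * a * (1 - a)) = d / (2 * sqrt a) + d / (2 * (1 - a)) * sqrt a"
    using a by (simp add: field_simps) (metis a(3) mult.assoc mult.commute)
  finally show ?thesis
    by (simp add: a_def algebra_simps)
qed

lemma scaled_residual_has_vector_derivative_zero:
  fixes u :: "real \<Rightarrow> 'a::real_normed_vector"
  assumes \<alpha>: "(\<alpha> has_real_derivative d) (at t)" "0 < \<alpha> t" "\<alpha> t < 1"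
    and u: "(u has_vector_derivative
              (d / (2 * sqrt (\<alpha> t))) *\<^sub>R x0 - (d / (2 * (1 - \<alpha> t))) *\<^sub>R (u t - sqrt (\<alpha> t) *\<^sub>R x0)) (at t)"
  shows "((\<lambda>t. (1 / sqrt (1 - \<alpha> t)) *\<^sub>R (u t - sqrt (\<alpha> t) *\<^sub>R x0)) has_vector_derivative 0) (at t)"
proof -
  let ?w = "u t - sqrt (\<alpha> t) *\<^sub>R x0"
  have "((\<lambda>t. sqrt (\<alpha> t)) has_real_derivative d / (2 * sqrt (\<alpha> t))) (at t)"
    using \<alpha> by (auto intro!: derivative_eq_intros simp: field_simps)
  from has_vector_derivative_diff[OF u has_vector_derivative_scaleR[OF this has_vector_derivative_const[of x0]]]
  have w: "((\<lambda>t. u t - sqrt (\<alpha> t) *\<^sub>R x0) has_vector_derivative - (d / (2 * (1 - \<alpha> t))) *\<^sub>R ?w) (at t)"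
    by simp
  have "((\<lambda>t. 1 / sqrt (1 - \<alpha> t)) has_real_derivative d / (2 * (1 - \<alpha> t)) * (1 / sqrt (1 - \<alpha> t))) (at t)"
    using \<alpha> by (auto intro!: derivative_eq_intros simp: field_simps)
  from has_vector_derivative_scaleR[OF this w] show ?thesis
    by (simp add: algebra_simps)
qed

lemma scaled_residual_constant_on_probability_flow:
  fixes u :: "real \<Rightarrow> real^'n"
  assumes \<alpha>_deriv: "\<And>t. t \<in> {a<..<b} \<Longrightarrow> (\<alpha> has_real_derivative \<alpha>' t) (at t)"
    and \<alpha>'_nonpos: "\<And>t. t \<in> {a<..<b} \<Longrightarrow> \<alpha>' t \<le> 0"
    and \<alpha>_pos: "\<And>t. t \<in> {a<..<b} \<Longrightarrow> 0 < \<alpha> t"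
    and \<alpha>_less_1: "\<And>t. t \<in> {a<..<b} \<Longrightarrow> \<alpha> t < 1"
    and ode: "\<And>t. t \<in> {a<..<b} \<Longrightarrow> (u has_vector_derivative
               (Fcoef \<alpha> t *\<^sub>R u t - (1/2 * (Gcoef \<alpha> t * Gcoef \<alpha> t)) *\<^sub>R score \<alpha> x0 t (u t))) (at t)"
  obtains c where "\<And>t. t \<in> {a<..<b} \<Longrightarrow> (1 / sqrt (1 - \<alpha> t)) *\<^sub>R (u t - sqrt (\<alpha> t) *\<^sub>R x0) = c"
proof -
  have "((\<lambda>t. (1 / sqrt (1 - \<alpha> t)) *\<^sub>R (u t - sqrt (\<alpha> t) *\<^sub>R x0)) has_vector_derivative 0)
          (at t within {a<..<b})" if t: "t \<in> {a<..<b}" for t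
  proof -
    note \<alpha>_at_t = \<alpha>_deriv[OF t] \<alpha>_pos[OF t] \<alpha>_less_1[OF t]
    have "(u has_vector_derivative (\<alpha>' t / (2 * sqrt (\<alpha> t))) *\<^sub>R x0
            - (\<alpha>' t / (2 * (1 - \<alpha> t))) *\<^sub>R (u t - sqrt (\<alpha> t) *\<^sub>R x0)) (at t)"
      using ode[OF t] unfolding probability_flow_drift_eq[OF \<alpha>_at_t(1) \<alpha>'_nonpos[OF t] \<alpha>_at_t(2,3)] .
    then show ?thesis
      by (rule has_vector_derivative_at_within[OF scaled_residual_has_vector_derivative_zero[OF \<alpha>_at_t]])
  qed
  then show ?thesis
    using that by (rule has_vector_derivative_zero_constant[OF convex_real_interval(8)])
qed

theorem proposition1:
  fixes \<alpha> :: "real \<Rightarrow> real" and T :: real and x0 :: "real^'n"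
    and u :: "real \<Rightarrow> real^'n"
  assumes T_pos: "T > 0"
    and \<alpha>_C1: "\<exists>\<alpha>'. continuous_on {0..T} \<alpha>' \<and>
                 (\<forall>t\<in>{0..T}. (\<alpha> has_real_derivative \<alpha>' t) (at t within {0..T}))"
    and \<alpha>_range: "\<forall>t\<in>{0..T}. \<alpha> t \<in> {0..1}"
    and \<alpha>_decr: "\<forall>s t. 0 \<le> s \<and> s < t \<and> t \<le> T \<longrightarrow> \<alpha> t < \<alpha> s"
    and \<alpha>_0: "\<alpha> 0 = 1" and \<alpha>_T: "\<alpha> T = 0"
    and ode: "\<forall>t\<in>{0<..<T}. (u has_vector_derivative
                 (Fcoef \<alpha> t *\<^sub>R u t
                  - (1/2 * (Gcoef \<alpha> t * Gcoef \<alpha> t)) *\<^sub>R score \<alpha> x0 t (u t))) (at t)"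
  shows "\<exists>c. (\<forall>t\<in>{0<..<T}. eps_GT \<alpha> x0 (u t) t = c) \<and>
             (\<forall>uT. (u \<longlongrightarrow> uT) (at_left T) \<longrightarrow>
                    c = - score \<alpha> x0 T uT \<and> c = uT)"
proof -
  obtain \<alpha>' where \<alpha>'_deriv: "\<forall>t\<in>{0..T}. (\<alpha> has_real_derivative \<alpha>' t) (at t within {0..T})"
    using \<alpha>_C1 by blast
  have \<alpha>_between: "0 < \<alpha> t" "\<alpha> t < 1" if "t \<in> {0<..<T}" for t
    using \<alpha>_decr[rule_format, of 0 t] \<alpha>_decr[rule_format, of t T] that \<alpha>_0 \<alpha>_T by auto
  have \<alpha>_DERIV: "(\<alpha> has_real_derivative \<alpha>' t) (at t)" if "t \<in> {0<..<T}" for t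
    using \<alpha>'_deriv[rule_format, of t] that at_within_Icc_at[of 0 t T] by simp
  have \<alpha>'_nonpos: "\<alpha>' t \<le> 0" if "t \<in> {0<..<T}" for t
  proof (rule DERIV_nonpos_if_eventually_le_right[OF \<alpha>_DERIV[OF that]])
    show "\<forall>\<^sub>F s in at_right t. \<alpha> s \<le> \<alpha> t"
      unfolding eventually_at_right_field
      using that \<alpha>_decr by (intro exI[of _ T]) (auto intro: less_imp_le)
  qed
  define E where "E t = (1 / sqrt (1 - \<alpha> t)) *\<^sub>R (u t - sqrt (\<alpha> t) *\<^sub>R x0)" for t
  obtain c where c: "\<And>t. t \<in> {0<..<T} \<Longrightarrow> E t = c"
    using scaled_residual_constant_on_probability_flow[OF \<alpha>_DERIV \<alpha>'_nonpos \<alpha>_between] ode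
    unfolding E_def by blast
  have "c = uT" if "(u \<longlongrightarrow> uT) (at_left T)" for uT
  proof -
    have "continuous (at T within {0..T}) \<alpha>"
      using \<alpha>'_deriv T_pos by (auto intro: DERIV_continuous)
    then have "(\<alpha> \<longlongrightarrow> 0) (at_left T)"
      using T_pos \<alpha>_T by (simp add: continuous_within at_within_Icc_at_left)
    then have "(E \<longlongrightarrow> uT) (at_left T)"
      unfolding E_def[abs_def] by (auto intro!: tendsto_eq_intros that)
    moreover have "\<forall>\<^sub>F t in at_left T. E t = c"
      using eventually_at_left_real[OF T_pos] by eventually_elim (simp add: c)
    ultimately have "((\<lambda>_. c) \<longlongrightarrow> uT) (at_left T)"
      by (rule Lim_transform_eventually)
    then show ?thesis
      using tendsto_const_iff[OF trivial_limit_at_left_real] by blast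
  qed
  then show ?thesis
    using c \<alpha>_between by (auto simp: eps_GT_eq score_eq \<alpha>_T E_def)
qed

end
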